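(* Let $X$ be a topological space and $x\in X$. Then $nu(X)\ge\left|\bigcup\{M: M$ is a maximal finitely non-Hausdorff subset of $X$ with $x\in M\}\right|$.
   Context: A non-empty subset $A$ of $X$ is finitely non-Hausdorff if for every non-empty finite $F\subseteq A$ and every family $\{U_y:y\in F\}$ of open neighborhoods $U_y$ of $y$, $\bigcap_{y\in F}U_y\neq\emptyset$; it is maximal finitely non-Hausdorff if no finitely non-Hausdorff subset of $X$ properly contains it. $A$ is finitely non-Urysohn if instead $\bigcap_{y\in F}\overline{U_y}\neq\emptyset$ for all such $F$ and families. The non-Urysohn number is $nu(X):=1+\sup\{|A|:A\subseteq X$ finitely non-Urysohn$\}$. *)

theory Defs
  imports "HOL-Analysis.Analysis"
begin

definition fin_non_hausdorff :: "'a topology \<Rightarrow> 'a set \<Rightarrow> bool" where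
  "fin_non_hausdorff X A \<longleftrightarrow> A \<noteq> {} \<and> A \<subseteq> topspace X \<and>
     (\<forall>F U. finite F \<and> F \<noteq> {} \<and> F \<subseteq> A \<and> (\<forall>y\<in>F. openin X (U y) \<and> y \<in> U y)
        \<longrightarrow> (\<Inter>y\<in>F. U y) \<noteq> {})"

definition max_fin_non_hausdorff :: "'a topology \<Rightarrow> 'a set \<Rightarrow> bool" where
  "max_fin_non_hausdorff X A \<longleftrightarrow> fin_non_hausdorff X A \<and>
     (\<forall>B. fin_non_hausdorff X B \<and> A \<subseteq> B \<longrightarrow> B = A)"

definition fin_non_urysohn :: "'a topology \<Rightarrow> 'a set \<Rightarrow> bool" where
  "fin_non_urysohn X A \<longleftrightarrow> A \<noteq> {} \<and> A \<subseteq> topspace X \<and>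
     (\<forall>F U. finite F \<and> F \<noteq> {} \<and> F \<subseteq> A \<and> (\<forall>y\<in>F. openin X (U y) \<and> y \<in> U y)
        \<longrightarrow> (\<Inter>y\<in>F. X closure_of (U y)) \<noteq> {})"

text \<open>C represents the cardinal sup{|A| : A finitely non-Urysohn}: |C| is an upper bound and
is below every upper bound of the form |D| with D a set of points (the supremum is at most
the cardinality of the space, hence representable this way).\<close>
definition is_sup_fnu :: "'a topology \<Rightarrow> 'a set \<Rightarrow> bool" where
  "is_sup_fnu X C \<longleftrightarrow> (\<forall>A. fin_non_urysohn X A \<longrightarrow> (card_of A, card_of C) \<in> ordLeq) \<and>
     (\<forall>D::'a set. (\<forall>A. fin_non_urysohn X A \<longrightarrow> (card_of A, card_of D) \<in> ordLeq) \<longrightarrow> (card_of C, card_of D) \<in> ordLeq)"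

text \<open>The non-Urysohn number nu(X) = 1 + sup{...}, as a cardinal (the cardinality of the
disjoint union of one extra point with a set of size sup{...}).\<close>
definition nu :: "'a topology \<Rightarrow> 'a option rel" where
  "nu X = card_of (insert None (Some ` (SOME C. is_sup_fnu X C)))"

end

theory Submission
  imports Defs
begin

unbundle cardinal_syntax

text \<open>Two points x and y of a finitely non-Hausdorff set cannot be separated by open
neighbourhoods, so x lies in the closure of every neighbourhood of y. Hence the union of all
finitely non-Hausdorff sets through x is finitely non-Urysohn: x is a common point of the closures
of any finitely many neighbourhoods of its points.\<close>

lemma fin_non_hausdorff_in_closure_of:
  assumes "fin_non_hausdorff X M" "x \<in> M" "y \<in> M" "openin X V" "y \<in> V"
  shows "x \<in> X closure_of V"
  unfolding in_closure_of
proof (intro conjI allI impI)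
  show "x \<in> topspace X"
    using assms(1,2) unfolding fin_non_hausdorff_def by blast
next
  fix T assume T: "x \<in> T \<and> openin X T"
  let ?W = "\<lambda>z. if z = x then T else V"
  show "\<exists>z. z \<in> V \<and> z \<in> T"
  proof (cases "y = x")
    case True
    then show ?thesis using T assms(5) by blast
  next
    case False
    have "(\<Inter>z\<in>{x, y}. ?W z) \<noteq> {}"
      using assms T unfolding fin_non_hausdorff_def
      by (elim conjE allE[of _ "{x, y}"] allE[of _ ?W]) auto
    then show ?thesis using False by auto
  qed
qed

lemma fin_non_urysohn_Union_through_point:
  assumes "\<Union>\<M> \<noteq> {}" and through_x: "\<And>M. M \<in> \<M> \<Longrightarrow> fin_non_hausdorff X M \<and> x \<in> M"
  shows "fin_non_urysohn X (\<Union>\<M>)"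
  unfolding fin_non_urysohn_def
proof (intro conjI allI impI)
  show "\<Union>\<M> \<noteq> {}" by fact
  show "\<Union>\<M> \<subseteq> topspace X"
    using through_x unfolding fin_non_hausdorff_def by (meson Union_least)
next
  fix F V
  assume "finite F \<and> F \<noteq> {} \<and> F \<subseteq> \<Union>\<M> \<and> (\<forall>y\<in>F. openin X (V y) \<and> y \<in> V y)"
  then have "F \<noteq> {}" and F_sub: "F \<subseteq> \<Union>\<M>" and V: "\<And>y. y \<in> F \<Longrightarrow> openin X (V y) \<and> y \<in> V y"
    by auto
  have "x \<in> X closure_of V y" if "y \<in> F" for y
  proof -
    obtain M where "M \<in> \<M>" "y \<in> M"
      using F_sub \<open>y \<in> F\<close> by auto
    with through_x V[OF \<open>y \<in> F\<close>] show ?thesis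
      by (auto intro: fin_non_hausdorff_in_closure_of)
  qed
  with \<open>F \<noteq> {}\<close> show "(\<Inter>y\<in>F. X closure_of V y) \<noteq> {}"
    by auto
qed

lemma card_of_least_exists:
  fixes P :: "'a set \<Rightarrow> bool"
  assumes "P UNIV"
  shows "\<exists>D. P D \<and> (\<forall>E. P E \<longrightarrow> |D| \<le>o |E| )"
proof -
  have "wf (inv_image ordLess card_of :: ('a set \<times> 'a set) set)"
    using wf_ordLess by (rule wf_inv_image)
  moreover have "UNIV \<in> Collect P"
    using assms by simp
  ultimately obtain D where "D \<in> Collect P"
    and minimal: "\<And>E. (E, D) \<in> inv_image ordLess card_of \<Longrightarrow> E \<notin> Collect P"
    by (rule wfE_min) blast
  have "|D| \<le>o |E|" if "P E" for E
  proof -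
    have "\<not> |E| <o |D|"
      using minimal[of E] that by auto
    then show ?thesis
      using not_ordLess_iff_ordLeq[OF card_of_Well_order card_of_Well_order] by blast
  qed
  with \<open>D \<in> Collect P\<close> show ?thesis
    by blast
qed

lemma is_sup_fnu_exists: "\<exists>C. is_sup_fnu X C"
  unfolding is_sup_fnu_def
  by (rule card_of_least_exists[of "\<lambda>D. \<forall>A. fin_non_urysohn X A \<longrightarrow> |A| \<le>o |D|"])
    (blast intro: card_of_mono1)

lemma fin_non_urysohn_card_of_le_nu:
  assumes "fin_non_urysohn X A"
  shows "|A| \<le>o nu X"
proof -
  define C where "C = (SOME C. is_sup_fnu X C)"
  have "is_sup_fnu X C"
    unfolding C_def using is_sup_fnu_exists by (rule someI_ex)
  then have "|A| \<le>o |C|"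
    using assms unfolding is_sup_fnu_def by blast
  also have "|C| \<le>o |insert None (Some ` C)|"
    by (rule card_of_ordLeq[THEN iffD1], rule exI[of _ Some]) auto
  finally show ?thesis
    unfolding nu_def C_def .
qed

theorem corollary2p18:
  fixes X :: "'a topology" and x :: 'a
  assumes "x \<in> topspace X"
  shows "(card_of (\<Union>{M. max_fin_non_hausdorff X M \<and> x \<in> M}), nu X) \<in> ordLeq"
proof (cases "\<Union>{M. max_fin_non_hausdorff X M \<and> x \<in> M} = {}")
  case True
  show ?thesis
    unfolding True nu_def by (rule card_of_empty)
next
  case False
  then have "fin_non_urysohn X (\<Union>{M. max_fin_non_hausdorff X M \<and> x \<in> M})"
    by (rule fin_non_urysohn_Union_through_point) (auto simp: max_fin_non_hausdorff_def)
  then show ?thesis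
    by (rule fin_non_urysohn_card_of_le_nu)
qed

end
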